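(* Let $\overline{\Phi}\subseteq\Phi$ be a rank $2$ root subsystem with dihedral reflection group $\overline W\subseteq W$, and let $w\in W$, written uniquely as $w=\lfloor w\rfloor\,\overline w$ with $\overline w\in\overline W$, where $\lfloor w\rfloor$ is the minimal element of the coset $w\overline W$. Under the bijection $\overline W\to w\overline W$, $\overline v\mapsto\lfloor w\rfloor\overline v$, every edge of the graph on $w\overline W$ induced from $\mathrm{QB}(W)$ corresponds to an edge of $\mathrm{QB}(\overline W)$. In other words, if $w\xrightarrow{\alpha}ws_\alpha$ is an edge of $\mathrm{QB}(W)$ with $\alpha\in\overline{\Phi}^+$, then $\overline w\xrightarrow{\alpha}\overline w s_\alpha$ is an edge of $\mathrm{QB}(\overline W)$.
   Context: $\Phi$ is an irreducible (finite, crystallographic) root system with positive roots $\Phi^+$, simple roots, Weyl group $W$ and length function $\ell$; for $\alpha\in\Phi$, $\alpha^\vee=2\alpha/\langle\alpha,\alpha\rangle$ and $\mathrm{ht}(\alpha^\vee)$ is the sum of the coefficients of $\alpha^\vee$ in the basis of simple coroots. The quantum Bruhat graph $\mathrm{QB}(W)$ is the directed graph on $W$ with an edge $v\xrightarrow{\alpha}vs_\alpha$ ($\alpha\in\Phi^+$) whenever $\ell(vs_\alpha)=\ell(v)+1$ or $\ell(vs_\alpha)=\ell(v)-2\mathrm{ht}(\alpha^\vee)+1$. A rank 2 root subsystem is a subset $\overline\Phi\subseteq\Phi$ which is itself a root system of rank 2; $\overline\Phi^+:=\overline\Phi\cap\Phi^+$ with its own simple roots, $\overline W$ is the group generated by $s_\alpha$,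 $\alpha\in\overline\Phi$, viewed as a dihedral reflection group with its own length function $\overline\ell$ (w.r.t. the simple reflections of $\overline\Phi$) and coroot heights computed in $\overline\Phi^\vee$; $\mathrm{QB}(\overline W)$ is defined by the same rule using $\overline\Phi^+$, $\overline\ell$ and these heights. On a coset $w\overline W$ consider the partial order generated by the relations $v<vs_\alpha$ for $v\in w\overline W$, $\alpha\in\overline\Phi$, $\ell(vs_\alpha)>\ell(v)$; by a result of Brenti–Fomin–Postnikov this order has a unique minimal element $\lfloor w\rfloor$, and $\overline v\mapsto\lfloor w\rfloor\overline v$ is an isomorphism of posets from $\overline W$ (Bruhat order) to $w\overline W$. *)

theory Defs
  imports "HOL-Analysis.Analysis"
begin

definition coroot :: "'a::euclidean_space \<Rightarrow> 'a" where
  "coroot \<alpha> = (2 / (\<alpha> \<bullet> \<alpha>)) *\<^sub>R \<alpha>"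

definition refl :: "'a::euclidean_space \<Rightarrow> 'a \<Rightarrow> 'a" where
  "refl \<alpha> x = x - (x \<bullet> coroot \<alpha>) *\<^sub>R \<alpha>"

text \<open>(Finite, reduced, crystallographic) root system in its span.\<close>
definition root_system :: "'a::euclidean_space set \<Rightarrow> bool" where
  "root_system \<Phi> \<longleftrightarrow> finite \<Phi> \<and> \<Phi> \<noteq> {} \<and> 0 \<notin> \<Phi>
     \<and> (\<forall>\<alpha>\<in>\<Phi>. refl \<alpha> ` \<Phi> = \<Phi>)
     \<and> (\<forall>\<alpha>\<in>\<Phi>. \<forall>\<beta>\<in>\<Phi>. \<beta> \<bullet> coroot \<alpha> \<in> \<int>)
     \<and> (\<forall>\<alpha>\<in>\<Phi>. \<forall>c::real. c *\<^sub>R \<alpha> \<in> \<Phi> \<longrightarrow> c = 1 \<or> c = -1)"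

definition irreducible_rs :: "'a::euclidean_space set \<Rightarrow> bool" where
  "irreducible_rs \<Phi> \<longleftrightarrow> \<not> (\<exists>A B. A \<noteq> {} \<and> B \<noteq> {} \<and> A \<union> B = \<Phi> \<and> A \<inter> B = {}
        \<and> (\<forall>a\<in>A. \<forall>b\<in>B. a \<bullet> b = 0))"

definition rank_rs :: "'a::euclidean_space set \<Rightarrow> nat" where
  "rank_rs \<Phi> = dim (span \<Phi>)"

text \<open>A positive system is determined by a regular vector \<xi> (no root orthogonal to it).\<close>
definition regular :: "'a::euclidean_space set \<Rightarrow> 'a \<Rightarrow> bool" where
  "regular \<Phi> \<xi> \<longleftrightarrow> (\<forall>\<alpha>\<in>\<Phi>. \<xi> \<bullet> \<alpha> \<noteq> 0)"

definition pos :: "'a::euclidean_space set \<Rightarrow> 'a \<Rightarrow> 'a set" where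
  "pos \<Phi> \<xi> = {\<alpha>\<in>\<Phi>. \<xi> \<bullet> \<alpha> > 0}"

definition simple :: "'a::euclidean_space set \<Rightarrow> 'a \<Rightarrow> 'a set" where
  "simple \<Phi> \<xi> = {\<alpha>\<in>pos \<Phi> \<xi>. \<not> (\<exists>\<beta>\<in>pos \<Phi> \<xi>. \<exists>\<gamma>\<in>pos \<Phi> \<xi>. \<alpha> = \<beta> + \<gamma>)}"

definition prod_refl :: "'a::euclidean_space list \<Rightarrow> 'a \<Rightarrow> 'a" where
  "prod_refl xs = foldr (\<lambda>\<beta> f. refl \<beta> \<circ> f) xs id"

definition weyl :: "'a::euclidean_space set \<Rightarrow> ('a \<Rightarrow> 'a) set" where
  "weyl \<Phi> = {prod_refl xs | xs. set xs \<subseteq> \<Phi>}"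

definition len :: "'a::euclidean_space set \<Rightarrow> 'a \<Rightarrow> ('a \<Rightarrow> 'a) \<Rightarrow> nat" where
  "len \<Phi> \<xi> w = (LEAST n. \<exists>xs. length xs = n \<and> set xs \<subseteq> simple \<Phi> \<xi> \<and> w = prod_refl xs)"

definition cht :: "'a::euclidean_space set \<Rightarrow> 'a \<Rightarrow> 'a \<Rightarrow> real" where
  "cht \<Phi> \<xi> \<alpha> = (THE h. \<exists>c. coroot \<alpha> = (\<Sum>\<beta>\<in>simple \<Phi> \<xi>. c \<beta> *\<^sub>R coroot \<beta>)
                          \<and> h = (\<Sum>\<beta>\<in>simple \<Phi> \<xi>. c \<beta>))"

definition qb_edge :: "'a::euclidean_space set \<Rightarrow> 'a \<Rightarrow> ('a \<Rightarrow> 'a) \<Rightarrow> 'a \<Rightarrow> bool" where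
  "qb_edge \<Phi> \<xi> v \<alpha> \<longleftrightarrow> v \<in> weyl \<Phi> \<and> \<alpha> \<in> pos \<Phi> \<xi> \<and>
     (len \<Phi> \<xi> (v \<circ> refl \<alpha>) = len \<Phi> \<xi> v + 1 \<or>
      real (len \<Phi> \<xi> (v \<circ> refl \<alpha>)) = real (len \<Phi> \<xi> v) - 2 * cht \<Phi> \<xi> \<alpha> + 1)"

definition wcoset :: "('a \<Rightarrow> 'a) \<Rightarrow> ('a \<Rightarrow> 'a) set \<Rightarrow> ('a \<Rightarrow> 'a) set" where
  "wcoset w H = {w \<circ> x | x. x \<in> H}"

definition coset_rel :: "'a::euclidean_space set \<Rightarrow> 'a set \<Rightarrow> 'a \<Rightarrow> ('a \<Rightarrow> 'a)
     \<Rightarrow> (('a \<Rightarrow> 'a) \<times> ('a \<Rightarrow> 'a)) set" where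
  "coset_rel \<Phi> \<Phi>b \<xi> w = {(v, v \<circ> refl \<alpha>) | v \<alpha>. v \<in> wcoset w (weyl \<Phi>b) \<and> \<alpha> \<in> \<Phi>b
        \<and> len \<Phi> \<xi> (v \<circ> refl \<alpha>) > len \<Phi> \<xi> v}"

definition coset_minimal :: "'a::euclidean_space set \<Rightarrow> 'a set \<Rightarrow> 'a \<Rightarrow> ('a \<Rightarrow> 'a)
     \<Rightarrow> ('a \<Rightarrow> 'a) \<Rightarrow> bool" where
  "coset_minimal \<Phi> \<Phi>b \<xi> w u \<longleftrightarrow> u \<in> wcoset w (weyl \<Phi>b) \<and>
     (\<forall>v\<in>wcoset w (weyl \<Phi>b). (v, u) \<in> (coset_rel \<Phi> \<Phi>b \<xi> w)\<^sup>* \<longrightarrow> v = u)"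

end

theory Submission
  imports Defs
begin

text \<open>The length of a Weyl group element is its number of inversions, and right multiplication
  by \<open>s\<^sub>\<alpha>\<close> changes the number of inversions of \<open>w\<close> by the sign balance of \<open>w\<close> on the
  inversion set \<open>N\<close> of \<open>s\<^sub>\<alpha>\<close> (outside \<open>N\<close> the reflection just permutes the positive roots).
  Pairing \<open>\<gamma>\<close> with \<open>- s\<^sub>\<alpha> \<gamma>\<close> shows that, when \<open>w \<alpha> > 0\<close>, every \<open>s\<^sub>\<alpha>\<close>-stable part of \<open>N\<close>
  has non-negative balance and the part containing \<open>\<alpha>\<close> positive balance; so an upward edge of
  \<open>QB(W)\<close> has balance exactly 1 on \<open>N \<inter> \<Phi>b\<close>, the inversion set of \<open>s\<^sub>\<alpha>\<close> in the subsystem.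
  Since \<open>(\<Sum>\<gamma>\<in>N. \<langle>\<gamma>, \<alpha>\<^sup>\<or>\<rangle>) = \<langle>2\<rho>, \<alpha>\<^sup>\<or>\<rangle> = 2 ht(\<alpha>\<^sup>\<or>)\<close>, a quantum edge means that \<open>w\<close> is
  negative on all of \<open>N\<close> and \<open>\<langle>\<gamma>, \<alpha>\<^sup>\<or>\<rangle> = 1\<close> on \<open>N - {\<alpha>}\<close>, conditions inherited by \<open>N \<inter> \<Phi>b\<close>.
  Finally, minimality of \<open>u = \<lfloor>w\<rfloor>\<close> makes \<open>u\<close> positive on the positive roots of \<open>\<Phi>b\<close>, so
  \<open>w = u wb\<close> and \<open>wb\<close> have the same signs on \<open>\<Phi>b\<close>.\<close>

lemma inner_coroot_self: "(\<alpha>::'a::euclidean_space) \<noteq> 0 \<Longrightarrow> \<alpha> \<bullet> coroot \<alpha> = 2"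
  by (simp add: coroot_def)

lemma refl_self: "(\<alpha>::'a::euclidean_space) \<noteq> 0 \<Longrightarrow> refl \<alpha> \<alpha> = - \<alpha>"
  by (simp add: refl_def inner_coroot_self algebra_simps) (simp add: scaleR_2)

lemma inner_refl_coroot: "(\<alpha>::'a::euclidean_space) \<noteq> 0 \<Longrightarrow> refl \<alpha> x \<bullet> coroot \<alpha> = - (x \<bullet> coroot \<alpha>)"
  by (simp add: refl_def inner_diff_left inner_coroot_self)

lemma refl_refl: "(\<alpha>::'a::euclidean_space) \<noteq> 0 \<Longrightarrow> refl \<alpha> (refl \<alpha> x) = x"
  by (simp add: refl_def [of \<alpha> "refl \<alpha> x"] inner_refl_coroot) (simp add: refl_def)

lemma refl_comp_refl: "(\<alpha>::'a::euclidean_space) \<noteq> 0 \<Longrightarrow> refl \<alpha> \<circ> refl \<alpha> = id"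
  by (auto simp: refl_refl)

lemma linear_refl: "linear (refl (\<alpha>::'a::euclidean_space))"
  by (rule linearI) (auto simp: refl_def inner_add_left algebra_simps)

lemma inner_refl_refl: "(\<alpha>::'a::euclidean_space) \<noteq> 0 \<Longrightarrow> refl \<alpha> x \<bullet> refl \<alpha> y = x \<bullet> y"
  by (simp add: refl_def coroot_def inner_diff_left inner_diff_right algebra_simps inner_commute)

lemma refl_uminus: "refl (- (\<alpha>::'a::euclidean_space)) = refl \<alpha>"
  by (auto simp: refl_def coroot_def fun_eq_iff)

lemma refl_minus_arg: "refl \<alpha> (- x) = - refl \<alpha> (x::'a::euclidean_space)"
  by (simp add: linear_neg[OF linear_refl])

lemma prod_refl_Nil [simp]: "prod_refl [] = id"
  by (simp add: prod_refl_def)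

lemma prod_refl_Cons [simp]: "prod_refl (\<alpha> # xs) = refl \<alpha> \<circ> prod_refl xs"
  by (simp add: prod_refl_def)

lemma prod_refl_append: "prod_refl (xs @ ys) = prod_refl xs \<circ> prod_refl ys"
  by (induction xs) auto

lemma prod_refl_snoc: "prod_refl (xs @ [\<alpha>]) = prod_refl xs \<circ> refl \<alpha>"
  by (simp add: prod_refl_append)

lemma linear_prod_refl: "linear (prod_refl xs)"
proof (induction xs)
  case (Cons \<alpha> xs)
  then show ?case by (simp only: prod_refl_Cons) (rule linear_compose[OF _ linear_refl])
qed (auto intro: linearI)

lemma inner_prod_refl: "0 \<notin> set xs \<Longrightarrow> prod_refl xs x \<bullet> prod_refl xs y = x \<bullet> y"
  by (induction xs) (auto simp: inner_refl_refl)

lemma prod_refl_rev_comp: "0 \<notin> set xs \<Longrightarrow> prod_refl (rev xs) \<circ> prod_refl xs = id"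
proof (induction xs)
  case (Cons \<alpha> xs)
  have "prod_refl (rev (\<alpha> # xs)) \<circ> prod_refl (\<alpha> # xs)
      = prod_refl (rev xs) \<circ> (refl \<alpha> \<circ> refl \<alpha>) \<circ> prod_refl xs"
    by (simp add: prod_refl_snoc comp_assoc)
  also have "\<dots> = id" using Cons by (auto simp: fun_eq_iff refl_refl)
  finally show ?case .
qed simp

lemma isometry_comp_refl:
  fixes w :: "'a::euclidean_space \<Rightarrow> 'a"
  assumes "linear w" "\<And>x y. w x \<bullet> w y = x \<bullet> y"
  shows "w \<circ> refl \<alpha> = refl (w \<alpha>) \<circ> w"
proof
  fix x
  have "w x \<bullet> coroot (w \<alpha>) = x \<bullet> coroot \<alpha>"
    by (simp add: coroot_def assms(2))
  moreover have "w (refl \<alpha> x) = w x - (x \<bullet> coroot \<alpha>) *\<^sub>R w \<alpha>"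
    using assms(1) by (simp add: refl_def linear_diff linear_scale)
  ultimately show "(w \<circ> refl \<alpha>) x = (refl (w \<alpha>) \<circ> w) x"
    by (simp add: refl_def)
qed

lemma card_eq_by_involution:
  assumes "finite B" "\<And>x. x \<in> A \<Longrightarrow> f x \<in> B" "\<And>y. y \<in> B \<Longrightarrow> f y \<in> A"
    and "\<And>x. x \<in> A \<Longrightarrow> f (f x) = x" "\<And>y. y \<in> B \<Longrightarrow> f (f y) = y"
  shows "card A = card B"
  using bij_betw_same_card[OF bij_betw_byWitness[of A f f B]] assms by auto

lemma sum_eq_0_by_involution:
  fixes g :: "'b \<Rightarrow> real"
  assumes "finite A" "\<And>x. x \<in> A \<Longrightarrow> f x \<in> A" "\<And>x. x \<in> A \<Longrightarrow> f (f x) = x"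
    and "\<And>x. x \<in> A \<Longrightarrow> g (f x) = - g x"
  shows "(\<Sum>x\<in>A. g x) = 0"
proof -
  have "bij_betw f A A" by (rule bij_betw_byWitness[of A f f]) (use assms in auto)
  then have "(\<Sum>x\<in>A. g x) = (\<Sum>x\<in>A. g (f x))" by (simp add: sum.reindex_bij_betw)
  also have "\<dots> = - (\<Sum>x\<in>A. g x)" using assms(4) by (simp add: sum_negf)
  finally show ?thesis by simp
qed

section \<open>Positive systems, root isometries and inversions\<close>

locale positive_system =
  fixes \<Phi> :: "'a::euclidean_space set" and \<xi> :: 'a
  assumes root_system: "root_system \<Phi>" and regular: "regular \<Phi> \<xi>"
begin

abbreviation "P \<equiv> pos \<Phi> \<xi>"
abbreviation "S \<equiv> simple \<Phi> \<xi>"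

lemma finite_roots: "finite \<Phi>"
  using root_system by (simp add: root_system_def)

lemma root_nonzero: "\<gamma> \<in> \<Phi> \<Longrightarrow> \<gamma> \<noteq> 0"
  using root_system by (auto simp: root_system_def)

lemma refl_root: "\<alpha> \<in> \<Phi> \<Longrightarrow> \<gamma> \<in> \<Phi> \<Longrightarrow> refl \<alpha> \<gamma> \<in> \<Phi>"
  using root_system unfolding root_system_def by blast

lemma inner_coroot_Ints: "\<alpha> \<in> \<Phi> \<Longrightarrow> \<gamma> \<in> \<Phi> \<Longrightarrow> \<gamma> \<bullet> coroot \<alpha> \<in> \<int>"
  using root_system unfolding root_system_def by blast

lemma scaleR_root: "\<alpha> \<in> \<Phi> \<Longrightarrow> c *\<^sub>R \<alpha> \<in> \<Phi> \<Longrightarrow> c = 1 \<or> c = -1"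
  using root_system unfolding root_system_def by blast

lemma uminus_root: "\<gamma> \<in> \<Phi> \<Longrightarrow> - \<gamma> \<in> \<Phi>"
  using refl_root[of \<gamma> \<gamma>] refl_self[OF root_nonzero] by simp

lemma inner_xi_nonzero: "\<gamma> \<in> \<Phi> \<Longrightarrow> \<xi> \<bullet> \<gamma> \<noteq> 0"
  using regular by (simp add: regular_def)

lemma pos_iff: "\<gamma> \<in> P \<longleftrightarrow> \<gamma> \<in> \<Phi> \<and> \<xi> \<bullet> \<gamma> > 0"
  by (simp add: pos_def)

lemma finite_pos: "finite P"
  using finite_roots by (simp add: pos_def)

lemma simple_pos: "\<gamma> \<in> S \<Longrightarrow> \<gamma> \<in> P"
  by (simp add: simple_def)

lemma simple_root: "\<gamma> \<in> S \<Longrightarrow> \<gamma> \<in> \<Phi>"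
  using simple_pos pos_iff by blast

lemma finite_simple: "finite S"
  using finite_pos by (rule rev_finite_subset) (auto simp: simple_pos)

lemma simple_iff: "\<gamma> \<in> S \<longleftrightarrow> \<gamma> \<in> P \<and> \<not> (\<exists>\<beta>\<in>P. \<exists>\<delta>\<in>P. \<gamma> = \<beta> + \<delta>)"
  by (simp add: simple_def)

lemma uminus_pos: "\<gamma> \<in> \<Phi> \<Longrightarrow> \<gamma> \<notin> P \<Longrightarrow> - \<gamma> \<in> P"
  using uminus_root inner_xi_nonzero by (force simp: pos_iff)

definition root_isometry :: "('a \<Rightarrow> 'a) \<Rightarrow> bool" where
  "root_isometry w \<longleftrightarrow> linear w \<and> (\<forall>x y. w x \<bullet> w y = x \<bullet> y) \<and> (\<forall>\<gamma>\<in>\<Phi>. w \<gamma> \<in> \<Phi>)"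

lemma root_isometry_prod_refl: "set xs \<subseteq> \<Phi> \<Longrightarrow> root_isometry (prod_refl xs)"
  unfolding root_isometry_def
proof (intro conjI)
  assume xs: "set xs \<subseteq> \<Phi>"
  show "linear (prod_refl xs)" by (rule linear_prod_refl)
  have "0 \<notin> set xs" using xs root_nonzero by auto
  then show "\<forall>x y. prod_refl xs x \<bullet> prod_refl xs y = x \<bullet> y" by (simp add: inner_prod_refl)
  show "\<forall>\<gamma>\<in>\<Phi>. prod_refl xs \<gamma> \<in> \<Phi>"
    using xs by (induction xs) (auto intro: refl_root)
qed

lemma root_isometry_weyl: "w \<in> weyl \<Phi> \<Longrightarrow> root_isometry w"
  by (auto simp: weyl_def root_isometry_prod_refl)

lemma root_isometry_linear: "root_isometry w \<Longrightarrow> linear w"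
  by (simp add: root_isometry_def)

lemma root_isometry_uminus: "root_isometry w \<Longrightarrow> w (- x) = - w x"
  by (simp add: root_isometry_def linear_neg)

lemma root_isometry_root: "root_isometry w \<Longrightarrow> \<gamma> \<in> \<Phi> \<Longrightarrow> w \<gamma> \<in> \<Phi>"
  by (simp add: root_isometry_def)

lemma root_isometry_sign_cases:
  assumes "root_isometry w" "\<gamma> \<in> \<Phi>"
  obtains "\<xi> \<bullet> w \<gamma> < 0" | "\<xi> \<bullet> w \<gamma> > 0"
  using inner_xi_nonzero[OF root_isometry_root[OF assms]] by (meson linorder_neqE_linordered_idom)

lemma root_isometry_comp_refl:
  assumes w: "root_isometry w" and \<alpha>: "\<alpha> \<in> \<Phi>"
  shows "root_isometry (w \<circ> refl \<alpha>)"
proof -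
  have "root_isometry (refl \<alpha>)" using root_isometry_prod_refl[of "[\<alpha>]"] \<alpha> by simp
  then show ?thesis using w unfolding root_isometry_def by (auto intro: linear_compose)
qed

lemma root_isometry_uminus_refl:
  assumes "root_isometry w"
  shows "w (- refl \<alpha> \<gamma>) = (\<gamma> \<bullet> coroot \<alpha>) *\<^sub>R w \<alpha> - w \<gamma>"
proof -
  have "w (- refl \<alpha> \<gamma>) = w ((\<gamma> \<bullet> coroot \<alpha>) *\<^sub>R \<alpha> - \<gamma>)" by (simp add: refl_def)
  also have "\<dots> = (\<gamma> \<bullet> coroot \<alpha>) *\<^sub>R w \<alpha> - w \<gamma>"
    using root_isometry_linear[OF assms] by (simp add: linear_diff linear_scale)
  finally show ?thesis .
qed

lemma root_isometry_neg_iff: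
  assumes "root_isometry w" "\<gamma> \<in> \<Phi>"
  shows "\<xi> \<bullet> w \<gamma> < 0 \<longleftrightarrow> \<not> \<xi> \<bullet> w \<gamma> > 0"
  using root_isometry_sign_cases[OF assms] by fastforce

lemma card_eq_card_pos_add_card_neg:
  assumes "root_isometry w" "X \<subseteq> \<Phi>"
  shows "card X = card {\<gamma>\<in>X. \<xi> \<bullet> w \<gamma> > 0} + card {\<gamma>\<in>X. \<xi> \<bullet> w \<gamma> < 0}"
proof -
  have "X = {\<gamma>\<in>X. \<xi> \<bullet> w \<gamma> > 0} \<union> {\<gamma>\<in>X. \<xi> \<bullet> w \<gamma> < 0}"
    using root_isometry_neg_iff[OF assms(1)] assms(2) by blast
  also have "card \<dots> = card {\<gamma>\<in>X. \<xi> \<bullet> w \<gamma> > 0} + card {\<gamma>\<in>X. \<xi> \<bullet> w \<gamma> < 0}"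
    using finite_subset[OF assms(2) finite_roots] by (intro card_Un_disjoint) auto
  finally show ?thesis .
qed

lemma weyl_comp: "v \<in> weyl \<Phi> \<Longrightarrow> w \<in> weyl \<Phi> \<Longrightarrow> v \<circ> w \<in> weyl \<Phi>"
  unfolding weyl_def by (auto simp: prod_refl_append[symmetric]) (metis le_sup_iff set_append)

lemma refl_weyl: "\<beta> \<in> \<Phi> \<Longrightarrow> refl \<beta> \<in> weyl \<Phi>"
  unfolding weyl_def by (rule CollectI, rule exI[of _ "[\<beta>]"]) simp

definition inversions :: "('a \<Rightarrow> 'a) \<Rightarrow> 'a set" where
  "inversions w = {\<gamma>\<in>P. \<xi> \<bullet> w \<gamma> < 0}"

lemma finite_inversions: "finite (inversions w)"
  using finite_pos by (simp add: inversions_def)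

lemma inversions_subset_pos: "inversions w \<subseteq> P"
  by (auto simp: inversions_def)

lemma inversions_id: "inversions id = {}"
  by (auto simp: inversions_def pos_iff)

lemma pos_mem_inversions_refl: "\<alpha> \<in> P \<Longrightarrow> \<alpha> \<in> inversions (refl \<alpha>)"
  using root_nonzero by (auto simp: inversions_def pos_iff refl_self)

lemma uminus_refl_inversions_refl:
  assumes "\<alpha> \<in> \<Phi>" "\<gamma> \<in> inversions (refl \<alpha>)"
  shows "- refl \<alpha> \<gamma> \<in> inversions (refl \<alpha>)"
  using assms refl_root[OF assms(1)] uminus_root root_nonzero
  by (auto simp: inversions_def pos_iff refl_minus_arg refl_refl)

lemma inner_coroot_pos_of_inversions_refl:
  assumes "\<alpha> \<in> P" "\<gamma> \<in> inversions (refl \<alpha>)"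
  shows "\<gamma> \<bullet> coroot \<alpha> > 0"
proof -
  have "\<xi> \<bullet> \<gamma> > 0" "\<xi> \<bullet> \<alpha> > 0" "\<xi> \<bullet> \<gamma> - (\<gamma> \<bullet> coroot \<alpha>) * (\<xi> \<bullet> \<alpha>) < 0"
    using assms by (auto simp: inversions_def pos_iff refl_def inner_diff_right)
  then show ?thesis by (smt (verit) mult_nonpos_nonneg)
qed

lemma inner_coroot_ge_1_of_inversions_refl:
  assumes "\<alpha> \<in> P" "\<gamma> \<in> inversions (refl \<alpha>)"
  shows "\<gamma> \<bullet> coroot \<alpha> \<ge> 1"
proof -
  have "\<gamma> \<bullet> coroot \<alpha> \<in> \<int>"
    using assms inner_coroot_Ints by (auto simp: inversions_def pos_iff)
  with inner_coroot_pos_of_inversions_refl[OF assms] show ?thesis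
    using Ints_nonzero_abs_ge1[of "\<gamma> \<bullet> coroot \<alpha>"] by auto
qed

lemma pos_split_by_refl:
  assumes "\<alpha> \<in> \<Phi>" "\<gamma> \<in> P"
  obtains "\<gamma> \<in> inversions (refl \<alpha>)" | "\<xi> \<bullet> refl \<alpha> \<gamma> > 0"
  using assms root_isometry_sign_cases[OF root_isometry_prod_refl[of "[\<alpha>]"], of \<gamma>]
  by (auto simp: inversions_def pos_iff)

text \<open>Outside the inversion set \<open>N\<close> of \<open>s\<^sub>\<alpha>\<close>, right multiplication by \<open>s\<^sub>\<alpha>\<close> permutes the
  positive roots; on \<open>N\<close> it exchanges the two signs via \<open>\<gamma> \<mapsto> - s\<^sub>\<alpha> \<gamma>\<close>.\<close>

lemma card_inversions_comp_refl:
  assumes w: "root_isometry w" and \<alpha>: "\<alpha> \<in> P"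
  defines "N \<equiv> inversions (refl \<alpha>)"
  shows "card (inversions (w \<circ> refl \<alpha>)) + card {\<gamma>\<in>N. \<xi> \<bullet> w \<gamma> < 0}
       = card (inversions w) + card {\<gamma>\<in>N. \<xi> \<bullet> w \<gamma> > 0}"
proof -
  have \<alpha>\<Phi>: "\<alpha> \<in> \<Phi>" and \<alpha>0: "\<alpha> \<noteq> 0" using \<alpha> root_nonzero by (auto simp: pos_iff)
  define B where "B = {\<gamma>\<in>P. \<xi> \<bullet> refl \<alpha> \<gamma> > 0}"
  have finite: "finite B" "finite N" using finite_pos finite_inversions by (auto simp: B_def N_def)
  have disj: "B \<inter> N = {}" by (auto simp: B_def N_def inversions_def)
  have P_eq: "P = B \<union> N"
    using pos_split_by_refl[OF \<alpha>\<Phi>] by (auto simp: B_def N_def inversions_def)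
  have B_refl: "refl \<alpha> \<gamma> \<in> B" if "\<gamma> \<in> B" for \<gamma>
    using that refl_root[OF \<alpha>\<Phi>, of \<gamma>] \<alpha>0 by (auto simp: B_def pos_iff refl_refl)
  have B_card: "card {\<gamma>\<in>B. \<xi> \<bullet> w (refl \<alpha> \<gamma>) < 0} = card {\<gamma>\<in>B. \<xi> \<bullet> w \<gamma> < 0}"
    by (rule card_eq_by_involution[where f = "refl \<alpha>"])
      (use finite B_refl \<alpha>0 in \<open>auto simp: refl_refl\<close>)
  have N_card: "card {\<gamma>\<in>N. \<xi> \<bullet> w (refl \<alpha> \<gamma>) < 0} = card {\<gamma>\<in>N. \<xi> \<bullet> w \<gamma> > 0}"
    by (rule card_eq_by_involution[where f = "\<lambda>\<gamma>. - refl \<alpha> \<gamma>"])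
      (use finite uminus_refl_inversions_refl[OF \<alpha>\<Phi>] root_isometry_uminus[OF w] \<alpha>0
        in \<open>auto simp: N_def refl_minus_arg refl_refl\<close>)
  have split: "card (inversions v) = card {\<gamma>\<in>B. \<xi> \<bullet> v \<gamma> < 0} + card {\<gamma>\<in>N. \<xi> \<bullet> v \<gamma> < 0}" for v
  proof -
    have "inversions v = {\<gamma>\<in>B. \<xi> \<bullet> v \<gamma> < 0} \<union> {\<gamma>\<in>N. \<xi> \<bullet> v \<gamma> < 0}"
      using P_eq by (auto simp: inversions_def)
    then show ?thesis using finite disj by (simp add: card_Un_disjoint disjoint_iff)
  qed
  show ?thesis
    using split[of "w \<circ> refl \<alpha>"] split[of w] B_card N_card by simp
qed


lemma pos_nonneg_comb_simple:
  "\<gamma> \<in> P \<Longrightarrow> \<exists>c. (\<forall>\<delta>\<in>S. c \<delta> \<ge> 0) \<and> \<gamma> = (\<Sum>\<delta>\<in>S. c \<delta> *\<^sub>R \<delta>)"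
proof (induction "card {\<beta>\<in>P. \<xi> \<bullet> \<beta> < \<xi> \<bullet> \<gamma>}" arbitrary: \<gamma> rule: less_induct)
  case less
  show ?case
  proof (cases "\<gamma> \<in> S")
    case True
    have "(\<Sum>\<delta>\<in>S. (if \<delta> = \<gamma> then 1 else 0) *\<^sub>R \<delta>) = \<gamma>"
      using True finite_simple by (simp add: if_distrib[of "\<lambda>c. c *\<^sub>R _"] sum.delta' cong: if_cong)
    then show ?thesis
      by (intro exI[of _ "\<lambda>\<delta>. if \<delta> = \<gamma> then 1 else 0"]) auto
  next
    case False
    have smaller: "card {\<beta>'\<in>P. \<xi> \<bullet> \<beta>' < \<xi> \<bullet> \<beta>} < card {\<beta>'\<in>P. \<xi> \<bullet> \<beta>' < \<xi> \<bullet> \<gamma>}"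
      if "\<beta> \<in> P" "\<delta> \<in> P" "\<gamma> = \<beta> + \<delta>" for \<beta> \<delta>
    proof (rule psubset_card_mono)
      have "\<xi> \<bullet> \<beta> < \<xi> \<bullet> \<gamma>" using that by (simp add: pos_iff inner_add_right)
      then show "{\<beta>'\<in>P. \<xi> \<bullet> \<beta>' < \<xi> \<bullet> \<beta>} \<subset> {\<beta>'\<in>P. \<xi> \<bullet> \<beta>' < \<xi> \<bullet> \<gamma>}" using that by auto
    qed (use finite_pos in auto)
    obtain \<beta> \<delta> where \<beta>\<delta>: "\<beta> \<in> P" "\<delta> \<in> P" "\<gamma> = \<beta> + \<delta>"
      using less.prems False simple_iff by auto
    obtain c1 where c1: "\<forall>\<epsilon>\<in>S. c1 \<epsilon> \<ge> 0" "\<beta> = (\<Sum>\<epsilon>\<in>S. c1 \<epsilon> *\<^sub>R \<epsilon>)"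
      using less.hyps[OF smaller[OF \<beta>\<delta>] \<beta>\<delta>(1)] by blast
    obtain c2 where c2: "\<forall>\<epsilon>\<in>S. c2 \<epsilon> \<ge> 0" "\<delta> = (\<Sum>\<epsilon>\<in>S. c2 \<epsilon> *\<^sub>R \<epsilon>)"
      using less.hyps[OF smaller[of \<delta> \<beta>] \<beta>\<delta>(2)] \<beta>\<delta> by (auto simp: add.commute)
    show ?thesis
      by (rule exI[of _ "\<lambda>\<delta>. c1 \<delta> + c2 \<delta>"])
        (use c1 c2 \<beta>\<delta>(3) in \<open>auto simp: scaleR_add_left sum.distrib\<close>)
  qed
qed

lemma simple_diff_not_root:
  assumes "\<beta> \<in> S" "\<gamma> \<in> S" shows "\<beta> - \<gamma> \<notin> \<Phi>"
proof
  assume "\<beta> - \<gamma> \<in> \<Phi>"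
  then consider "\<beta> - \<gamma> \<in> P" | "\<gamma> - \<beta> \<in> P" using uminus_pos by fastforce
  then show False
    by cases (use assms simple_iff simple_pos in \<open>metis diff_add_cancel\<close>)+
qed

text \<open>Two distinct simple roots enclose an obtuse angle: otherwise the Cartan integers
  \<open>\<langle>\<beta>, \<gamma>\<^sup>\<or>\<rangle>\<close> and \<open>\<langle>\<gamma>, \<beta>\<^sup>\<or>\<rangle>\<close> are positive with product below 4 (Cauchy-Schwarz), so
  one of them is 1 and the corresponding reflection produces the root \<open>\<beta> - \<gamma>\<close> or \<open>\<gamma> - \<beta>\<close>.\<close>

lemma simple_inner_nonpos:
  assumes \<beta>: "\<beta> \<in> S" and \<gamma>: "\<gamma> \<in> S" and ne: "\<beta> \<noteq> \<gamma>"
  shows "\<beta> \<bullet> \<gamma> \<le> 0"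
proof (rule ccontr)
  assume "\<not> \<beta> \<bullet> \<gamma> \<le> 0"
  then have pos: "\<beta> \<bullet> \<gamma> > 0" by simp
  have \<beta>\<Phi>: "\<beta> \<in> \<Phi>" and \<gamma>\<Phi>: "\<gamma> \<in> \<Phi>" using \<beta> \<gamma> simple_root by auto
  have \<beta>0: "\<beta> \<noteq> 0" and \<gamma>0: "\<gamma> \<noteq> 0" using root_nonzero \<beta>\<Phi> \<gamma>\<Phi> by auto
  have not_parallel: "\<bar>\<beta> \<bullet> \<gamma>\<bar> \<noteq> norm \<beta> * norm \<gamma>"
  proof
    assume "\<bar>\<beta> \<bullet> \<gamma>\<bar> = norm \<beta> * norm \<gamma>"
    then have "norm \<beta> *\<^sub>R \<gamma> = norm \<gamma> *\<^sub>R \<beta> \<or> norm \<beta> *\<^sub>R \<gamma> = - norm \<gamma> *\<^sub>R \<beta>"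
      by (simp add: norm_cauchy_schwarz_abs_eq)
    then obtain c where c: "\<gamma> = c *\<^sub>R \<beta>" using \<beta>0
      by (metis norm_eq_zero scaleR_scaleR field_class.field_inverse scaleR_one)
    then have "c = 1 \<or> c = -1" using scaleR_root[OF \<beta>\<Phi>] \<gamma>\<Phi> by simp
    then show False using c ne simple_pos[OF \<beta>] simple_pos[OF \<gamma>] by (auto simp: pos_iff)
  qed
  have "(\<beta> \<bullet> \<gamma>) * (\<beta> \<bullet> \<gamma>) < (norm \<beta> * norm \<gamma>) * (norm \<beta> * norm \<gamma>)"
    using Cauchy_Schwarz_ineq2[of \<beta> \<gamma>] not_parallel pos by (simp add: mult_strict_mono)
  also have "\<dots> = (\<beta> \<bullet> \<beta>) * (\<gamma> \<bullet> \<gamma>)"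
    by (simp add: power2_norm_eq_inner[symmetric] power2_eq_square)
  finally have "(\<beta> \<bullet> \<gamma>) * (\<beta> \<bullet> \<gamma>) < (\<beta> \<bullet> \<beta>) * (\<gamma> \<bullet> \<gamma>)" .
  moreover have "(\<beta> \<bullet> coroot \<gamma>) * (\<gamma> \<bullet> coroot \<beta>) = 4 * ((\<beta> \<bullet> \<gamma>) * (\<beta> \<bullet> \<gamma>)) / ((\<beta> \<bullet> \<beta>) * (\<gamma> \<bullet> \<gamma>))"
    by (simp add: coroot_def inner_commute)
  ultimately have prod_lt: "(\<beta> \<bullet> coroot \<gamma>) * (\<gamma> \<bullet> coroot \<beta>) < 4"
    using \<beta>0 \<gamma>0 by (simp add: divide_less_eq)
  obtain a b where ab: "\<beta> \<bullet> coroot \<gamma> = of_int a" "\<gamma> \<bullet> coroot \<beta> = of_int b"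
    using inner_coroot_Ints[OF \<gamma>\<Phi> \<beta>\<Phi>] inner_coroot_Ints[OF \<beta>\<Phi> \<gamma>\<Phi>] Ints_cases by metis
  have "\<beta> \<bullet> coroot \<gamma> > 0" "\<gamma> \<bullet> coroot \<beta> > 0"
    using pos \<beta>0 \<gamma>0 by (simp_all add: coroot_def inner_commute)
  then have "a > 0" "b > 0" using ab by simp_all
  moreover have "a * b < 4" using prod_lt ab by (metis of_int_less_iff of_int_mult of_int_numeral)
  ultimately have "a = 1 \<or> b = 1"
    using mult_mono[of 2 a 2 b] by (cases "a = 1"; cases "b = 1") auto
  then have "refl \<gamma> \<beta> = \<beta> - \<gamma> \<or> refl \<beta> \<gamma> = \<gamma> - \<beta>" using ab by (auto simp: refl_def)
  then show False
    using refl_root[OF \<gamma>\<Phi> \<beta>\<Phi>] refl_root[OF \<beta>\<Phi> \<gamma>\<Phi>] simple_diff_not_root \<beta> \<gamma> by metis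
qed

text \<open>Linear independence of the simple roots: split a vanishing combination into its
  positive and negative part \<open>v = u\<close>; obtuseness gives \<open>u \<bullet> u = v \<bullet> u \<le> 0\<close>, and pairing with
  \<open>\<xi>\<close> shows that both parts have zero coefficients.\<close>

lemma simple_comb_eq_0:
  assumes "(\<Sum>\<delta>\<in>S. c \<delta> *\<^sub>R \<delta>) = 0" "\<delta>0 \<in> S"
  shows "c \<delta>0 = 0"
proof -
  define cp where "cp \<delta> = max (c \<delta>) 0" for \<delta>
  define cm where "cm \<delta> = max (- c \<delta>) 0" for \<delta>
  define v where "v = (\<Sum>\<delta>\<in>S. cp \<delta> *\<^sub>R \<delta>)"
  define u where "u = (\<Sum>\<delta>\<in>S. cm \<delta> *\<^sub>R \<delta>)"
  have c_eq: "c \<delta> = cp \<delta> - cm \<delta>" for \<delta> by (simp add: cp_def cm_def)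
  have "v - u = (\<Sum>\<delta>\<in>S. c \<delta> *\<^sub>R \<delta>)"
    by (simp add: v_def u_def c_eq scaleR_diff_left sum_subtractf)
  then have vu: "v = u" using assms by simp
  have "v \<bullet> u = (\<Sum>\<epsilon>\<in>S. \<Sum>\<delta>\<in>S. cp \<delta> * cm \<epsilon> * (\<delta> \<bullet> \<epsilon>))"
    by (simp add: v_def u_def inner_sum_left inner_sum_right sum_distrib_left mult.assoc mult.left_commute)
  also have "\<dots> \<le> 0"
  proof (intro sum_nonpos)
    fix \<epsilon> \<delta> assume "\<epsilon> \<in> S" "\<delta> \<in> S"
    then show "cp \<delta> * cm \<epsilon> * (\<delta> \<bullet> \<epsilon>) \<le> 0"
      using simple_inner_nonpos[of \<delta> \<epsilon>]
      by (cases "\<delta> = \<epsilon>") (auto simp: cp_def cm_def max_def mult_nonneg_nonpos)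
  qed
  finally have u0: "u = 0" using vu by (metis antisym inner_ge_zero inner_eq_zero_iff)
  have xi_simple: "\<xi> \<bullet> \<delta> > 0" if "\<delta> \<in> S" for \<delta> using that simple_pos by (simp add: pos_iff)
  have part_0: "d \<delta>0 = 0" if "\<forall>\<delta>. d \<delta> \<ge> 0" "(\<Sum>\<delta>\<in>S. d \<delta> *\<^sub>R \<delta>) = 0" for d
  proof -
    have "(\<Sum>\<delta>\<in>S. d \<delta> * (\<xi> \<bullet> \<delta>)) = 0"
      using arg_cong[OF that(2), of "inner \<xi>"] by (simp add: inner_sum_right)
    then have "d \<delta>0 * (\<xi> \<bullet> \<delta>0) = 0"
      using sum_nonneg_eq_0_iff[OF finite_simple, of "\<lambda>\<delta>. d \<delta> * (\<xi> \<bullet> \<delta>)"] xi_simple that(1) assms(2)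
      by (auto simp: less_imp_le)
    then show ?thesis using xi_simple[OF assms(2)] by simp
  qed
  have "cp \<delta>0 = 0" by (rule part_0) (use u0 vu in \<open>auto simp: cp_def v_def\<close>)
  moreover have "cm \<delta>0 = 0" by (rule part_0) (use u0 in \<open>auto simp: cm_def u_def\<close>)
  ultimately show ?thesis by (simp add: c_eq)
qed

lemma refl_simple_pos:
  assumes \<beta>: "\<beta> \<in> S" and \<gamma>: "\<gamma> \<in> P" and ne: "\<gamma> \<noteq> \<beta>"
  shows "refl \<beta> \<gamma> \<in> P"
proof (rule ccontr)
  assume "refl \<beta> \<gamma> \<notin> P"
  have \<beta>\<Phi>: "\<beta> \<in> \<Phi>" and \<gamma>\<Phi>: "\<gamma> \<in> \<Phi>" using \<beta> \<gamma> simple_root by (auto simp: pos_iff)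
  have "- refl \<beta> \<gamma> \<in> P" using uminus_pos[OF refl_root[OF \<beta>\<Phi> \<gamma>\<Phi>]] \<open>refl \<beta> \<gamma> \<notin> P\<close> .
  then obtain d where d: "\<forall>\<delta>\<in>S. d \<delta> \<ge> 0" "- refl \<beta> \<gamma> = (\<Sum>\<delta>\<in>S. d \<delta> *\<^sub>R \<delta>)"
    using pos_nonneg_comb_simple by blast
  obtain c where c: "\<forall>\<delta>\<in>S. c \<delta> \<ge> 0" "\<gamma> = (\<Sum>\<delta>\<in>S. c \<delta> *\<^sub>R \<delta>)"
    using pos_nonneg_comb_simple \<gamma> by blast
  define k where "k = \<gamma> \<bullet> coroot \<beta>"
  have k\<beta>: "k *\<^sub>R \<beta> = (\<Sum>\<delta>\<in>S. (if \<delta> = \<beta> then k else 0) *\<^sub>R \<delta>)"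
    using \<beta> finite_simple by (simp add: if_distrib[of "\<lambda>c. c *\<^sub>R _"] sum.delta' cong: if_cong)
  have "(\<Sum>\<delta>\<in>S. (c \<delta> + d \<delta> - (if \<delta> = \<beta> then k else 0)) *\<^sub>R \<delta>) = \<gamma> + (- refl \<beta> \<gamma>) - k *\<^sub>R \<beta>"
    by (simp add: scaleR_add_left scaleR_diff_left sum.distrib sum_subtractf flip: c(2) d(2) k\<beta>)
  also have "\<dots> = 0" by (simp add: refl_def k_def)
  finally have "c \<delta> + d \<delta> = 0" if "\<delta> \<in> S" "\<delta> \<noteq> \<beta>" for \<delta>
    using simple_comb_eq_0[OF _ that(1)] that(2) by fastforce
  then have c0: "c \<delta> = 0" if "\<delta> \<in> S" "\<delta> \<noteq> \<beta>" for \<delta>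
    using that c(1) d(1) by (meson add_nonneg_eq_0_iff)
  have "\<gamma> = (\<Sum>\<delta>\<in>S. if \<delta> = \<beta> then c \<beta> *\<^sub>R \<beta> else 0)"
    unfolding c(2) by (rule sum.cong) (auto simp: c0)
  then have "\<gamma> = c \<beta> *\<^sub>R \<beta>" using \<beta> finite_simple by (simp add: sum.delta')
  moreover from this have "c \<beta> = 1 \<or> c \<beta> = -1" using scaleR_root[OF \<beta>\<Phi>] \<gamma>\<Phi> by simp
  ultimately show False using ne \<gamma> simple_pos[OF \<beta>] by (auto simp: pos_iff)
qed

lemma inversions_refl_simple: "\<beta> \<in> S \<Longrightarrow> inversions (refl \<beta>) = {\<beta>}"
  using refl_simple_pos pos_mem_inversions_refl simple_pos by (fastforce simp: inversions_def pos_iff)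

lemma card_inversions_comp_refl_simple:
  assumes "root_isometry w" "\<beta> \<in> S"
  shows "card (inversions (w \<circ> refl \<beta>)) + (if \<xi> \<bullet> w \<beta> < 0 then 1 else 0)
       = card (inversions w) + (if \<xi> \<bullet> w \<beta> > 0 then 1 else 0)"
  using card_inversions_comp_refl[OF assms(1) simple_pos[OF assms(2)]] inversions_refl_simple[OF assms(2)]
  by (auto split: if_splits simp: Collect_conv_if)


section \<open>Length as number of inversions\<close>

lemma card_inversions_prod_refl_le: "set xs \<subseteq> S \<Longrightarrow> card (inversions (prod_refl xs)) \<le> length xs"
proof (induction xs rule: rev_induct)
  case (snoc \<beta> xs)
  have w: "root_isometry (prod_refl xs)"
    using snoc.prems simple_root by (auto intro: root_isometry_prod_refl)
  have xs: "set xs \<subseteq> S" and \<beta>: "\<beta> \<in> S" using snoc.prems by auto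
  have "card (inversions (prod_refl xs \<circ> refl \<beta>)) \<le> card (inversions (prod_refl xs)) + 1"
    using card_inversions_comp_refl_simple[OF w \<beta>] by (simp split: if_splits)
  with snoc.IH[OF xs] show ?case unfolding prod_refl_snoc length_append_singleton by linarith
qed (simp add: inversions_id)

lemma exchange:
  assumes "set ys \<subseteq> S" "\<beta> \<in> S" "\<xi> \<bullet> prod_refl ys \<beta> < 0"
  shows "\<exists>zs. set zs \<subseteq> S \<and> length zs < length ys \<and> prod_refl ys \<circ> refl \<beta> = prod_refl zs"
  using assms
proof (induction ys)
  case Nil then show ?case using simple_pos[of \<beta>] by (simp add: pos_iff)
next
  case (Cons y ys)
  let ?v = "prod_refl ys"
  have v: "root_isometry ?v" using Cons.prems simple_root by (auto intro: root_isometry_prod_refl)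
  show ?case
  proof (cases "\<xi> \<bullet> ?v \<beta> < 0")
    case True
    then obtain zs where zs: "set zs \<subseteq> S" "length zs < length ys" "?v \<circ> refl \<beta> = prod_refl zs"
      using Cons.IH[OF _ Cons.prems(2) True] Cons.prems(1) by (meson set_subset_Cons subset_trans)
    have "prod_refl (y # ys) \<circ> refl \<beta> = prod_refl (y # zs)"
      using zs(3) by (metis prod_refl_Cons comp_assoc)
    moreover have "set (y # zs) \<subseteq> S" "length (y # zs) < length (y # ys)" using zs Cons.prems by auto
    ultimately show ?thesis by blast
  next
    case False
    have y: "y \<in> S" using Cons.prems by simp
    have "?v \<beta> \<in> P"
      using False root_isometry_sign_cases[OF v simple_root[OF Cons.prems(2)]] root_isometry_root[OF v]
        simple_root[OF Cons.prems(2)] by (auto simp: pos_iff)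
    moreover have "refl y (?v \<beta>) \<notin> P" using Cons.prems(3) by (simp add: pos_iff)
    ultimately have "?v \<beta> = y" using refl_simple_pos[OF y] by blast
    then have "?v \<circ> refl \<beta> = refl y \<circ> ?v"
      using isometry_comp_refl[of ?v \<beta>] v by (simp add: root_isometry_def)
    then have "prod_refl (y # ys) \<circ> refl \<beta> = (refl y \<circ> refl y) \<circ> ?v"
      by (simp add: comp_assoc)
    also have "\<dots> = ?v" using root_nonzero simple_root[OF y] by (simp add: refl_comp_refl)
    finally have "prod_refl (y # ys) \<circ> refl \<beta> = prod_refl ys" .
    moreover have "set ys \<subseteq> S" using Cons.prems by simp
    ultimately show ?thesis by (metis length_Cons lessI)
  qed
qed

definition simple_generated :: "('a \<Rightarrow> 'a) \<Rightarrow> bool" where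
  "simple_generated w \<longleftrightarrow> (\<exists>xs. set xs \<subseteq> S \<and> w = prod_refl xs)"

lemma len_le_length: "set xs \<subseteq> S \<Longrightarrow> len \<Phi> \<xi> (prod_refl xs) \<le> length xs"
  unfolding len_def by (rule Least_le) blast

lemma reduced_word_exists:
  "simple_generated w \<Longrightarrow> \<exists>xs. set xs \<subseteq> S \<and> w = prod_refl xs \<and> length xs = len \<Phi> \<xi> w"
  unfolding simple_generated_def len_def by (rule LeastI2_ex) auto

lemma len_le_card_inversions:
  "simple_generated w \<Longrightarrow> len \<Phi> \<xi> w \<le> card (inversions w)"
proof (induction "len \<Phi> \<xi> w" arbitrary: w)
  case (Suc m)
  obtain xs where xs: "set xs \<subseteq> S" "w = prod_refl xs" "length xs = Suc m"
    using reduced_word_exists[OF Suc.prems] Suc.hyps(2) by auto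
  then obtain ys \<beta> where ys: "xs = ys @ [\<beta>]" "set ys \<subseteq> S" "\<beta> \<in> S"
    by (metis length_Suc_conv_rev set_append le_sup_iff subsetD list.set_intros(1))
  let ?v = "prod_refl ys"
  have w: "w = ?v \<circ> refl \<beta>" using xs ys by (simp add: prod_refl_snoc)
  have v: "simple_generated ?v" "root_isometry ?v"
    using ys simple_root by (auto simp: simple_generated_def intro: root_isometry_prod_refl)
  obtain zs where zs: "set zs \<subseteq> S" "?v = prod_refl zs" "length zs = len \<Phi> \<xi> ?v"
    using reduced_word_exists[OF v(1)] by auto
  have "len \<Phi> \<xi> w \<le> len \<Phi> \<xi> ?v + 1"
    using len_le_length[of "zs @ [\<beta>]"] zs ys w by (simp add: prod_refl_snoc)
  moreover have "len \<Phi> \<xi> ?v \<le> m" using len_le_length[OF ys(2)] xs ys by simp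
  ultimately have len_v: "len \<Phi> \<xi> ?v = m" using Suc.hyps(2) by simp
  show ?case
  proof (cases rule: root_isometry_sign_cases[OF v(2) simple_root[OF ys(3)]])
    case 1
    then obtain us where "set us \<subseteq> S" "length us < length ys" "w = prod_refl us"
      using exchange[OF ys(2,3)] w by blast
    then show ?thesis using len_le_length[of us] xs ys Suc.hyps(2) by simp
  next
    case 2
    then have "card (inversions w) = card (inversions ?v) + 1"
      using card_inversions_comp_refl_simple[OF v(2) ys(3)] w by simp
    then show ?thesis using Suc.hyps(1)[OF len_v[symmetric] v(1)] Suc.hyps(2) len_v by simp
  qed
qed simp

lemma len_eq_card_inversions_simple_generated:
  "simple_generated w \<Longrightarrow> len \<Phi> \<xi> w = card (inversions w)"
  using reduced_word_exists[of w] card_inversions_prod_refl_le len_le_card_inversions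
  by (metis le_antisym)

lemma simple_generated_comp:
  "simple_generated v \<Longrightarrow> simple_generated w \<Longrightarrow> simple_generated (v \<circ> w)"
  unfolding simple_generated_def by (metis prod_refl_append set_append le_sup_iff)

lemma simple_generated_rev: "set xs \<subseteq> S \<Longrightarrow> simple_generated (prod_refl (rev xs))"
  unfolding simple_generated_def by (intro exI[of _ "rev xs"]) simp

lemma pos_conj_simple: "\<alpha> \<in> P \<Longrightarrow> \<exists>xs \<beta>. set xs \<subseteq> S \<and> \<beta> \<in> S \<and> prod_refl xs \<beta> = \<alpha>"
proof (induction "card {\<beta>\<in>P. \<xi> \<bullet> \<beta> < \<xi> \<bullet> \<alpha>}" arbitrary: \<alpha> rule: less_induct)
  case less
  show ?case
  proof (cases "\<alpha> \<in> S")
    case True then show ?thesis by (intro exI[of _ "[]"] exI[of _ \<alpha>]) auto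
  next
    case False
    have \<alpha>\<Phi>: "\<alpha> \<in> \<Phi>" using less.prems by (simp add: pos_iff)
    have "\<exists>\<beta>\<in>S. \<alpha> \<bullet> \<beta> > 0"
    proof (rule ccontr)
      assume "\<not> (\<exists>\<beta>\<in>S. \<alpha> \<bullet> \<beta> > 0)"
      moreover obtain c where c: "\<forall>\<delta>\<in>S. c \<delta> \<ge> 0" "\<alpha> = (\<Sum>\<delta>\<in>S. c \<delta> *\<^sub>R \<delta>)"
        using pos_nonneg_comb_simple less.prems by blast
      moreover have "\<alpha> \<bullet> \<alpha> = (\<Sum>\<delta>\<in>S. c \<delta> * (\<alpha> \<bullet> \<delta>))"
        by (subst (2) c(2)) (simp add: inner_sum_right)
      ultimately have "\<alpha> \<bullet> \<alpha> \<le> 0" by (auto intro!: sum_nonpos simp: mult_nonneg_nonpos not_less)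
      then show False using root_nonzero[OF \<alpha>\<Phi>] by (metis antisym inner_ge_zero inner_eq_zero_iff)
    qed
    then obtain \<beta> where \<beta>: "\<beta> \<in> S" "\<alpha> \<bullet> \<beta> > 0" by blast
    have \<beta>\<Phi>: "\<beta> \<in> \<Phi>" "\<xi> \<bullet> \<beta> > 0" using simple_pos[OF \<beta>(1)] by (auto simp: pos_iff)
    have \<beta>0: "\<beta> \<noteq> 0" using root_nonzero \<beta>\<Phi> by simp
    have refl_\<alpha>: "refl \<beta> \<alpha> \<in> P" using refl_simple_pos[OF \<beta>(1) less.prems] False \<beta> by auto
    have "\<alpha> \<bullet> coroot \<beta> > 0" using \<beta> \<beta>0 by (simp add: coroot_def)
    then have "\<xi> \<bullet> refl \<beta> \<alpha> < \<xi> \<bullet> \<alpha>"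
      using \<beta>\<Phi> by (simp add: refl_def inner_diff_right)
    then have "card {\<beta>'\<in>P. \<xi> \<bullet> \<beta>' < \<xi> \<bullet> refl \<beta> \<alpha>} < card {\<beta>'\<in>P. \<xi> \<bullet> \<beta>' < \<xi> \<bullet> \<alpha>}"
      using refl_\<alpha> by (intro psubset_card_mono) (use finite_pos in auto)
    then obtain xs \<beta>' where xs: "set xs \<subseteq> S" "\<beta>' \<in> S" "prod_refl xs \<beta>' = refl \<beta> \<alpha>"
      using less.hyps[OF _ refl_\<alpha>] by blast
    then have "prod_refl (\<beta> # xs) \<beta>' = \<alpha>" using \<beta>0 by (simp add: refl_refl)
    then show ?thesis using xs \<beta> by (intro exI[of _ "\<beta> # xs"] exI[of _ \<beta>']) auto
  qed
qed

lemma simple_generated_refl: assumes "\<alpha> \<in> \<Phi>" shows "simple_generated (refl \<alpha>)"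
proof -
  have "simple_generated (refl \<gamma>)" if \<gamma>: "\<gamma> \<in> P" for \<gamma>
  proof -
    obtain xs \<beta> where xs: "set xs \<subseteq> S" "\<beta> \<in> S" "prod_refl xs \<beta> = \<gamma>"
      using pos_conj_simple[OF \<gamma>] by blast
    let ?w = "prod_refl xs"
    have w: "root_isometry ?w" using xs(1) simple_root by (auto intro: root_isometry_prod_refl)
    have "refl \<gamma> \<circ> ?w = ?w \<circ> refl \<beta>"
      using isometry_comp_refl[of ?w \<beta>] w xs(3) by (simp add: root_isometry_def)
    moreover have "0 \<notin> set (rev xs)" using xs(1) root_nonzero simple_root by auto
    ultimately have "refl \<gamma> = ?w \<circ> refl \<beta> \<circ> prod_refl (rev xs)"
      using prod_refl_rev_comp[of "rev xs"] by (simp add: comp_assoc[symmetric] fun_eq_iff) metis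
    moreover have "simple_generated ?w" "simple_generated (refl \<beta>)"
      using xs unfolding simple_generated_def by (auto intro: exI[of _ "[\<beta>]"])
    ultimately show ?thesis using simple_generated_comp simple_generated_rev[OF xs(1)] by metis
  qed
  then show ?thesis using uminus_pos[OF assms] refl_uminus by metis
qed

lemma simple_generated_prod_refl: "set xs \<subseteq> \<Phi> \<Longrightarrow> simple_generated (prod_refl xs)"
proof (induction xs)
  case Nil then show ?case unfolding simple_generated_def by (intro exI[of _ "[]"]) simp
next
  case (Cons \<alpha> xs)
  then show ?case by (simp only: prod_refl_Cons) (intro simple_generated_comp simple_generated_refl, auto)
qed

lemma simple_generated_weyl: "w \<in> weyl \<Phi> \<Longrightarrow> simple_generated w"
  by (auto simp: weyl_def simple_generated_prod_refl)

theorem len_eq_card_inversions: "w \<in> weyl \<Phi> \<Longrightarrow> len \<Phi> \<xi> w = card (inversions w)"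
  by (simp add: len_eq_card_inversions_simple_generated simple_generated_weyl)

section \<open>Sign balance on the inversion set of a reflection\<close>

text \<open>Since \<open>w (- s\<^sub>\<alpha> \<gamma>) = \<langle>\<gamma>, \<alpha>\<^sup>\<or>\<rangle> w \<alpha> - w \<gamma>\<close> with \<open>\<langle>\<gamma>, \<alpha>\<^sup>\<or>\<rangle> > 0\<close>, the involution
  \<open>\<gamma> \<mapsto> - s\<^sub>\<alpha> \<gamma>\<close> turns negative values of \<open>\<xi> \<bullet> w\<close> into positive ones when \<open>w \<alpha>\<close> is positive.\<close>

lemma card_neg_le_card_pos_by_pairing:
  assumes w: "root_isometry w" and \<alpha>: "\<alpha> \<in> P" and w\<alpha>: "\<xi> \<bullet> w \<alpha> > 0"
    and X: "X \<subseteq> inversions (refl \<alpha>)" "\<And>\<gamma>. \<gamma> \<in> X \<Longrightarrow> - refl \<alpha> \<gamma> \<in> X"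
  shows "card {\<gamma>\<in>X. \<xi> \<bullet> w \<gamma> < 0} \<le> card {\<gamma>\<in>X - {\<alpha>}. \<xi> \<bullet> w \<gamma> > 0}"
proof (rule card_inj_on_le[where f = "\<lambda>\<gamma>. - refl \<alpha> \<gamma>"])
  have \<alpha>0: "\<alpha> \<noteq> 0" using \<alpha> root_nonzero by (simp add: pos_iff)
  show "inj_on (\<lambda>\<gamma>. - refl \<alpha> \<gamma>) {\<gamma>\<in>X. \<xi> \<bullet> w \<gamma> < 0}"
  proof (rule inj_onI)
    fix x y assume "- refl \<alpha> x = - refl \<alpha> y"
    then have "refl \<alpha> (refl \<alpha> x) = refl \<alpha> (refl \<alpha> y)" by simp
    then show "x = y" by (simp add: refl_refl[OF \<alpha>0])
  qed
  show "finite {\<gamma>\<in>X - {\<alpha>}. \<xi> \<bullet> w \<gamma> > 0}"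
    using finite_subset[OF X(1) finite_inversions] by simp
  show "(\<lambda>\<gamma>. - refl \<alpha> \<gamma>) ` {\<gamma>\<in>X. \<xi> \<bullet> w \<gamma> < 0} \<subseteq> {\<gamma>\<in>X - {\<alpha>}. \<xi> \<bullet> w \<gamma> > 0}"
  proof (rule image_subsetI)
    fix \<gamma> assume "\<gamma> \<in> {\<gamma>\<in>X. \<xi> \<bullet> w \<gamma> < 0}"
    then have \<gamma>: "\<gamma> \<in> X" "\<xi> \<bullet> w \<gamma> < 0" by auto
    have "\<gamma> \<bullet> coroot \<alpha> > 0" using inner_coroot_pos_of_inversions_refl[OF \<alpha>] X(1) \<gamma>(1) by blast
    then have "(\<gamma> \<bullet> coroot \<alpha>) * (\<xi> \<bullet> w \<alpha>) > 0" using w\<alpha> by simp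
    then have pos: "\<xi> \<bullet> w (- refl \<alpha> \<gamma>) > 0"
      using \<gamma>(2) by (simp add: root_isometry_uminus_refl[OF w] inner_diff_right)
    moreover have "- refl \<alpha> \<gamma> \<noteq> \<alpha>"
    proof
      assume "- refl \<alpha> \<gamma> = \<alpha>"
      then have "\<gamma> = refl \<alpha> (- \<alpha>)" using refl_refl[OF \<alpha>0, of \<gamma>] by (metis minus_minus)
      then have "\<gamma> = \<alpha>" by (simp add: refl_minus_arg refl_self[OF \<alpha>0])
      then show False using \<gamma>(2) w\<alpha> by simp
    qed
    ultimately show "- refl \<alpha> \<gamma> \<in> {\<gamma>\<in>X - {\<alpha>}. \<xi> \<bullet> w \<gamma> > 0}"
      using X(2)[OF \<gamma>(1)] by auto
  qed
qed

lemma card_inversions_less_comp_refl: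
  assumes w: "root_isometry w" and \<alpha>: "\<alpha> \<in> P" and w\<alpha>: "\<xi> \<bullet> w \<alpha> > 0"
  shows "card (inversions w) < card (inversions (w \<circ> refl \<alpha>))"
proof -
  let ?N = "inversions (refl \<alpha>)"
  have "{\<gamma>\<in>?N - {\<alpha>}. \<xi> \<bullet> w \<gamma> > 0} = {\<gamma>\<in>?N. \<xi> \<bullet> w \<gamma> > 0} - {\<alpha>}" by auto
  then have "card {\<gamma>\<in>?N. \<xi> \<bullet> w \<gamma> < 0} \<le> card ({\<gamma>\<in>?N. \<xi> \<bullet> w \<gamma> > 0} - {\<alpha>})"
    using card_neg_le_card_pos_by_pairing[OF w \<alpha> w\<alpha> order_refl] uminus_refl_inversions_refl \<alpha>
    by (simp add: pos_iff)
  also have "\<dots> < card {\<gamma>\<in>?N. \<xi> \<bullet> w \<gamma> > 0}"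
    by (rule card_Diff1_less) (use finite_inversions pos_mem_inversions_refl[OF \<alpha>] w\<alpha> in auto)
  finally show ?thesis using card_inversions_comp_refl[OF w \<alpha>] by linarith
qed

lemma card_inversions_comp_refl_less:
  assumes w: "root_isometry w" and \<alpha>: "\<alpha> \<in> P" and w\<alpha>: "\<xi> \<bullet> w \<alpha> < 0"
  shows "card (inversions (w \<circ> refl \<alpha>)) < card (inversions w)"
proof -
  have \<alpha>\<Phi>: "\<alpha> \<in> \<Phi>" and \<alpha>0: "\<alpha> \<noteq> 0" using \<alpha> root_nonzero by (auto simp: pos_iff)
  have "\<xi> \<bullet> (w \<circ> refl \<alpha>) \<alpha> > 0"
    using w\<alpha> refl_self[OF \<alpha>0] root_isometry_uminus[OF w] by simp
  then show ?thesis
    using card_inversions_less_comp_refl[OF root_isometry_comp_refl[OF w \<alpha>\<Phi>] \<alpha>] \<alpha>0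
    by (simp add: comp_assoc refl_comp_refl)
qed

lemma len_comp_refl:
  assumes w: "w \<in> weyl \<Phi>" and \<alpha>: "\<alpha> \<in> P"
  defines "N \<equiv> inversions (refl \<alpha>)"
  shows "real (len \<Phi> \<xi> (w \<circ> refl \<alpha>))
       = real (len \<Phi> \<xi> w) + real (card {\<gamma>\<in>N. \<xi> \<bullet> w \<gamma> > 0}) - real (card {\<gamma>\<in>N. \<xi> \<bullet> w \<gamma> < 0})"
proof -
  have "w \<circ> refl \<alpha> \<in> weyl \<Phi>" using weyl_comp[OF w refl_weyl] \<alpha> by (simp add: pos_iff)
  then show ?thesis
    using card_inversions_comp_refl[OF root_isometry_weyl[OF w] \<alpha>] len_eq_card_inversions w
    unfolding N_def by (simp add: of_nat_add[symmetric] del: of_nat_add)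
qed

section \<open>Coroot heights and quantum steps\<close>

definition rho2 :: 'a where
  "rho2 = (\<Sum>\<gamma>\<in>P. \<gamma>)"

lemma inner_rho2_coroot_simple:
  assumes \<beta>: "\<beta> \<in> S"
  shows "rho2 \<bullet> coroot \<beta> = 2"
proof -
  have \<beta>P: "\<beta> \<in> P" and \<beta>0: "\<beta> \<noteq> 0" using simple_pos[OF \<beta>] root_nonzero by (auto simp: pos_iff)
  have "(\<Sum>\<gamma>\<in>P - {\<beta>}. \<gamma> \<bullet> coroot \<beta>) = 0"
  proof (rule sum_eq_0_by_involution[where f = "refl \<beta>"])
    fix \<gamma> assume \<gamma>: "\<gamma> \<in> P - {\<beta>}"
    have "refl \<beta> \<gamma> \<noteq> \<beta>"
    proof
      assume "refl \<beta> \<gamma> = \<beta>"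
      then have "\<gamma> = - \<beta>" using \<beta>0 by (metis refl_refl refl_self)
      then show False using \<gamma> \<beta>P by (auto simp: pos_iff)
    qed
    then show "refl \<beta> \<gamma> \<in> P - {\<beta>}" using refl_simple_pos[OF \<beta>] \<gamma> by auto
  qed (use finite_pos \<beta>0 in \<open>auto simp: refl_refl inner_refl_coroot\<close>)
  then have "(\<Sum>\<gamma>\<in>P. \<gamma> \<bullet> coroot \<beta>) = \<beta> \<bullet> coroot \<beta>"
    using finite_pos \<beta>P by (simp add: sum.remove)
  then show ?thesis using \<beta>0 by (simp add: rho2_def inner_sum_left inner_coroot_self)
qed

lemma sum_inversions_refl_coroot_eq_rho2:
  assumes \<alpha>: "\<alpha> \<in> P"
  shows "(\<Sum>\<gamma>\<in>inversions (refl \<alpha>). \<gamma> \<bullet> coroot \<alpha>) = rho2 \<bullet> coroot \<alpha>"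
proof -
  have \<alpha>\<Phi>: "\<alpha> \<in> \<Phi>" and \<alpha>0: "\<alpha> \<noteq> 0" using \<alpha> root_nonzero by (auto simp: pos_iff)
  define B where "B = {\<gamma>\<in>P. \<xi> \<bullet> refl \<alpha> \<gamma> > 0}"
  have split: "P = B \<union> inversions (refl \<alpha>)"
    using pos_split_by_refl[OF \<alpha>\<Phi>] by (auto simp: B_def inversions_def)
  have B_0: "(\<Sum>\<gamma>\<in>B. \<gamma> \<bullet> coroot \<alpha>) = 0"
  proof (rule sum_eq_0_by_involution[where f = "refl \<alpha>"])
    fix \<gamma> assume "\<gamma> \<in> B"
    then show "refl \<alpha> \<gamma> \<in> B"
      using refl_root[OF \<alpha>\<Phi>, of \<gamma>] \<alpha>0 by (auto simp: B_def pos_iff refl_refl)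
  qed (use finite_pos \<alpha>0 in \<open>auto simp: B_def refl_refl inner_refl_coroot\<close>)
  have "rho2 \<bullet> coroot \<alpha> = (\<Sum>\<gamma>\<in>P. \<gamma> \<bullet> coroot \<alpha>)" by (simp add: rho2_def inner_sum_left)
  also have "\<dots> = (\<Sum>\<gamma>\<in>B. \<gamma> \<bullet> coroot \<alpha>) + (\<Sum>\<gamma>\<in>inversions (refl \<alpha>). \<gamma> \<bullet> coroot \<alpha>)"
    unfolding split using finite_inversions finite_pos
    by (intro sum.union_disjoint) (auto simp: B_def inversions_def)
  finally show ?thesis using B_0 by simp
qed

lemma cht_eq_rho2:
  assumes \<alpha>: "\<alpha> \<in> P"
  shows "cht \<Phi> \<xi> \<alpha> = rho2 \<bullet> coroot \<alpha> / 2"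
proof -
  have \<alpha>0: "\<alpha> \<noteq> 0" using \<alpha> root_nonzero by (simp add: pos_iff)
  have unique: "(\<Sum>\<beta>\<in>S. c \<beta>) = rho2 \<bullet> coroot \<alpha> / 2"
    if "coroot \<alpha> = (\<Sum>\<beta>\<in>S. c \<beta> *\<^sub>R coroot \<beta>)" for c
  proof -
    have "rho2 \<bullet> coroot \<alpha> = (\<Sum>\<beta>\<in>S. c \<beta> * (rho2 \<bullet> coroot \<beta>))"
      by (subst that) (simp add: inner_sum_right)
    also have "\<dots> = (\<Sum>\<beta>\<in>S. c \<beta> * 2)" by (simp add: inner_rho2_coroot_simple)
    finally show ?thesis by (simp add: sum_distrib_right[symmetric])
  qed
  obtain a where a: "\<alpha> = (\<Sum>\<delta>\<in>S. a \<delta> *\<^sub>R \<delta>)" using pos_nonneg_comb_simple \<alpha> by blast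
  define c where "c \<delta> = a \<delta> * (\<delta> \<bullet> \<delta>) / (\<alpha> \<bullet> \<alpha>)" for \<delta>
  have "(\<Sum>\<beta>\<in>S. c \<beta> *\<^sub>R coroot \<beta>) = (\<Sum>\<beta>\<in>S. (2 / (\<alpha> \<bullet> \<alpha>)) *\<^sub>R (a \<beta> *\<^sub>R \<beta>))"
    using simple_root root_nonzero by (intro sum.cong) (auto simp: c_def coroot_def)
  also have "\<dots> = (2 / (\<alpha> \<bullet> \<alpha>)) *\<^sub>R (\<Sum>\<beta>\<in>S. a \<beta> *\<^sub>R \<beta>)" by (simp add: scaleR_sum_right)
  also have "\<dots> = coroot \<alpha>" by (simp only: a[symmetric] coroot_def)
  finally have c: "coroot \<alpha> = (\<Sum>\<beta>\<in>S. c \<beta> *\<^sub>R coroot \<beta>)" ..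
  show ?thesis unfolding cht_def
  proof (rule the_equality)
    show "\<exists>c. coroot \<alpha> = (\<Sum>\<beta>\<in>S. c \<beta> *\<^sub>R coroot \<beta>) \<and> rho2 \<bullet> coroot \<alpha> / 2 = (\<Sum>\<beta>\<in>S. c \<beta>)"
      using c unique[OF c] by metis
  qed (use unique in blast)
qed

lemma sum_inversions_refl_coroot:
  "\<alpha> \<in> P \<Longrightarrow> (\<Sum>\<gamma>\<in>inversions (refl \<alpha>). \<gamma> \<bullet> coroot \<alpha>) = 2 * cht \<Phi> \<xi> \<alpha>"
  by (simp add: sum_inversions_refl_coroot_eq_rho2 cht_eq_rho2)

lemma sum_inversions_refl_coroot_excess:
  assumes \<alpha>: "\<alpha> \<in> P"
  defines "N \<equiv> inversions (refl \<alpha>)"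
  shows "(\<Sum>\<gamma>\<in>N - {\<alpha>}. \<gamma> \<bullet> coroot \<alpha> - 1) = 2 * cht \<Phi> \<xi> \<alpha> - real (card N) - 1"
proof -
  have \<alpha>0: "\<alpha> \<noteq> 0" and \<alpha>N: "\<alpha> \<in> N" and finite: "finite N"
    using \<alpha> root_nonzero pos_mem_inversions_refl finite_inversions by (auto simp: N_def pos_iff)
  then have "card N \<ge> 1" by (auto simp: Suc_le_eq card_gt_0_iff)
  then have "real (card (N - {\<alpha>})) = real (card N) - 1"
    using \<alpha>N by (simp add: card_Diff_singleton of_nat_diff)
  moreover have "2 * cht \<Phi> \<xi> \<alpha> = \<alpha> \<bullet> coroot \<alpha> + (\<Sum>\<gamma>\<in>N - {\<alpha>}. \<gamma> \<bullet> coroot \<alpha>)"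
    using sum_inversions_refl_coroot[OF \<alpha>] \<alpha>N finite by (simp add: N_def sum.remove)
  ultimately show ?thesis by (simp add: inner_coroot_self[OF \<alpha>0] sum_subtractf)
qed

theorem len_comp_refl_quantum_iff:
  assumes w: "w \<in> weyl \<Phi>" and \<alpha>: "\<alpha> \<in> P"
  defines "N \<equiv> inversions (refl \<alpha>)"
  shows "real (len \<Phi> \<xi> (w \<circ> refl \<alpha>)) = real (len \<Phi> \<xi> w) - 2 * cht \<Phi> \<xi> \<alpha> + 1
     \<longleftrightarrow> (\<forall>\<gamma>\<in>N. \<xi> \<bullet> w \<gamma> < 0) \<and> (\<forall>\<gamma>\<in>N - {\<alpha>}. \<gamma> \<bullet> coroot \<alpha> = 1)"
proof -
  have w': "root_isometry w" using root_isometry_weyl[OF w] .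
  have finite: "finite N" using finite_inversions by (simp add: N_def)
  have N\<Phi>: "N \<subseteq> \<Phi>" using inversions_subset_pos[of "refl \<alpha>"] pos_iff unfolding N_def by blast
  define np where "np = card {\<gamma>\<in>N. \<xi> \<bullet> w \<gamma> > 0}"
  define e where "e = (\<Sum>\<gamma>\<in>N - {\<alpha>}. \<gamma> \<bullet> coroot \<alpha> - 1)"
  have e_nonneg: "\<gamma> \<bullet> coroot \<alpha> - 1 \<ge> 0" if "\<gamma> \<in> N - {\<alpha>}" for \<gamma>
    using inner_coroot_ge_1_of_inversions_refl[OF \<alpha>] that by (simp add: N_def)
  have "real (len \<Phi> \<xi> (w \<circ> refl \<alpha>)) - (real (len \<Phi> \<xi> w) - 2 * cht \<Phi> \<xi> \<alpha> + 1) = 2 * np + e"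
    using len_comp_refl[OF w \<alpha>] card_eq_card_pos_add_card_neg[OF w' N\<Phi>]
      sum_inversions_refl_coroot_excess[OF \<alpha>] by (simp add: np_def e_def N_def)
  moreover have "e \<ge> 0" unfolding e_def by (rule sum_nonneg) (rule e_nonneg)
  ultimately have "real (len \<Phi> \<xi> (w \<circ> refl \<alpha>)) = real (len \<Phi> \<xi> w) - 2 * cht \<Phi> \<xi> \<alpha> + 1
      \<longleftrightarrow> np = 0 \<and> e = 0" by linarith
  also have "np = 0 \<longleftrightarrow> (\<forall>\<gamma>\<in>N. \<xi> \<bullet> w \<gamma> < 0)"
    unfolding np_def using finite root_isometry_neg_iff[OF w'] N\<Phi> by auto
  also have "e = 0 \<longleftrightarrow> (\<forall>\<gamma>\<in>N - {\<alpha>}. \<gamma> \<bullet> coroot \<alpha> = 1)"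
  proof -
    have "e = 0 \<longleftrightarrow> (\<forall>\<gamma>\<in>N - {\<alpha>}. \<gamma> \<bullet> coroot \<alpha> - 1 = 0)"
      unfolding e_def using finite by (intro sum_nonneg_eq_0_iff) (use e_nonneg in auto)
    then show ?thesis by simp
  qed
  finally show ?thesis .
qed

end

section \<open>Restriction to a subsystem\<close>

lemma card_Collect_Int_Diff:
  assumes "finite X"
  shows "card {x\<in>X. p x} = card {x\<in>X \<inter> Y. p x} + card {x\<in>X - Y. p x}"
proof -
  have "{x\<in>X. p x} = {x\<in>X \<inter> Y. p x} \<union> {x\<in>X - Y. p x}" by auto
  also have "card \<dots> = card {x\<in>X \<inter> Y. p x} + card {x\<in>X - Y. p x}"
    by (rule card_Un_disjoint) (use assms in auto)
  finally show ?thesis .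
qed

locale positive_subsystem = positive_system \<Phi> \<xi> + sub: positive_system \<Phi>b \<xi>
  for \<Phi> \<Phi>b :: "'a::euclidean_space set" and \<xi> :: 'a +
  assumes subsystem: "\<Phi>b \<subseteq> \<Phi>"
begin

lemma pos_subsystem: "sub.P = P \<inter> \<Phi>b"
  using subsystem by (auto simp: pos_def)

lemma inversions_refl_subsystem:
  "\<alpha> \<in> \<Phi>b \<Longrightarrow> sub.inversions (refl \<alpha>) = inversions (refl \<alpha>) \<inter> \<Phi>b"
  by (auto simp: inversions_def sub.inversions_def pos_subsystem)

lemma weyl_subsystem: "weyl \<Phi>b \<subseteq> weyl \<Phi>"
  using subsystem by (auto simp: weyl_def)

lemma uminus_refl_mem_subsystem_iff:
  assumes "\<alpha> \<in> \<Phi>b" shows "- refl \<alpha> \<gamma> \<in> \<Phi>b \<longleftrightarrow> \<gamma> \<in> \<Phi>b"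
proof
  have \<alpha>0: "\<alpha> \<noteq> 0" using sub.root_nonzero assms by simp
  have closed: "- refl \<alpha> \<delta> \<in> \<Phi>b" if "\<delta> \<in> \<Phi>b" for \<delta>
    using sub.uminus_root sub.refl_root assms that by blast
  show "\<gamma> \<in> \<Phi>b \<Longrightarrow> - refl \<alpha> \<gamma> \<in> \<Phi>b" by (rule closed)
  show "- refl \<alpha> \<gamma> \<in> \<Phi>b \<Longrightarrow> \<gamma> \<in> \<Phi>b"
    using closed[of "- refl \<alpha> \<gamma>"] \<alpha>0 by (simp add: refl_minus_arg refl_refl)
qed

text \<open>A balance of 1 forces \<open>w \<alpha> > 0\<close>; then pairing gives non-negative balance outside \<open>\<Phi>b\<close>
  and balance at least 1 inside (because of \<open>\<alpha>\<close> itself), so both bounds are attained.\<close>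

lemma sign_balance_subsystem:
  assumes w: "root_isometry w" and \<alpha>: "\<alpha> \<in> sub.P"
  defines "N \<equiv> inversions (refl \<alpha>)"
  assumes up: "card {\<gamma>\<in>N. \<xi> \<bullet> w \<gamma> > 0} = card {\<gamma>\<in>N. \<xi> \<bullet> w \<gamma> < 0} + 1"
  shows "card {\<gamma>\<in>N \<inter> \<Phi>b. \<xi> \<bullet> w \<gamma> > 0} = card {\<gamma>\<in>N \<inter> \<Phi>b. \<xi> \<bullet> w \<gamma> < 0} + 1"
proof -
  have \<alpha>P: "\<alpha> \<in> P" and \<alpha>b: "\<alpha> \<in> \<Phi>b" using \<alpha> pos_subsystem by auto
  have finite: "finite N" by (simp add: N_def finite_inversions)
  have "card (inversions (w \<circ> refl \<alpha>)) = card (inversions w) + 1"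
    using card_inversions_comp_refl[OF w \<alpha>P] up by (simp add: N_def)
  then have w\<alpha>: "\<xi> \<bullet> w \<alpha> > 0"
    using card_inversions_comp_refl_less[OF w \<alpha>P] root_isometry_sign_cases[OF w, of \<alpha>] \<alpha>P
    by (force simp: pos_iff)
  have closed: "- refl \<alpha> \<gamma> \<in> N" if "\<gamma> \<in> N" for \<gamma>
    using uminus_refl_inversions_refl \<alpha>P that by (simp add: N_def pos_iff)
  have "card {\<gamma>\<in>N - \<Phi>b. \<xi> \<bullet> w \<gamma> < 0} \<le> card {\<gamma>\<in>(N - \<Phi>b) - {\<alpha>}. \<xi> \<bullet> w \<gamma> > 0}"
    using closed uminus_refl_mem_subsystem_iff[OF \<alpha>b]
    by (intro card_neg_le_card_pos_by_pairing[OF w \<alpha>P w\<alpha>]) (auto simp: N_def)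
  also have "\<dots> \<le> card {\<gamma>\<in>N - \<Phi>b. \<xi> \<bullet> w \<gamma> > 0}"
    using finite by (intro card_mono) auto
  finally have outside: "card {\<gamma>\<in>N - \<Phi>b. \<xi> \<bullet> w \<gamma> < 0} \<le> card {\<gamma>\<in>N - \<Phi>b. \<xi> \<bullet> w \<gamma> > 0}" .
  let ?Q = "{\<gamma>\<in>N \<inter> \<Phi>b. \<xi> \<bullet> w \<gamma> > 0}"
  have "card {\<gamma>\<in>N \<inter> \<Phi>b. \<xi> \<bullet> w \<gamma> < 0} \<le> card {\<gamma>\<in>(N \<inter> \<Phi>b) - {\<alpha>}. \<xi> \<bullet> w \<gamma> > 0}"
    using closed uminus_refl_mem_subsystem_iff[OF \<alpha>b]
    by (intro card_neg_le_card_pos_by_pairing[OF w \<alpha>P w\<alpha>]) (auto simp: N_def)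
  also have "{\<gamma>\<in>(N \<inter> \<Phi>b) - {\<alpha>}. \<xi> \<bullet> w \<gamma> > 0} = ?Q - {\<alpha>}" by auto
  finally have "card {\<gamma>\<in>N \<inter> \<Phi>b. \<xi> \<bullet> w \<gamma> < 0} \<le> card (?Q - {\<alpha>})" .
  moreover have "Suc (card (?Q - {\<alpha>})) = card ?Q"
    using pos_mem_inversions_refl[OF \<alpha>P] \<alpha>b w\<alpha> finite by (intro card_Suc_Diff1) (auto simp: N_def)
  ultimately have inside: "card {\<gamma>\<in>N \<inter> \<Phi>b. \<xi> \<bullet> w \<gamma> < 0} + 1 \<le> card ?Q" by simp
  show ?thesis
    using up outside inside card_Collect_Int_Diff[OF finite, of "\<lambda>\<gamma>. \<xi> \<bullet> w \<gamma> > 0" \<Phi>b]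
      card_Collect_Int_Diff[OF finite, of "\<lambda>\<gamma>. \<xi> \<bullet> w \<gamma> < 0" \<Phi>b] by linarith
qed

lemma qb_edge_subsystem:
  assumes w: "w \<in> weyl \<Phi>" and wb: "wb \<in> weyl \<Phi>b" and \<alpha>: "\<alpha> \<in> sub.P"
    and same_sign: "\<And>\<gamma>. \<gamma> \<in> \<Phi>b \<Longrightarrow> \<xi> \<bullet> w \<gamma> > 0 \<longleftrightarrow> \<xi> \<bullet> wb \<gamma> > 0"
    and edge: "qb_edge \<Phi> \<xi> w \<alpha>"
  shows "qb_edge \<Phi>b \<xi> wb \<alpha>"
proof -
  let ?N = "inversions (refl \<alpha>)"
  have \<alpha>P: "\<alpha> \<in> P" and \<alpha>b: "\<alpha> \<in> \<Phi>b" using \<alpha> pos_subsystem by auto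
  have Nb: "sub.inversions (refl \<alpha>) = ?N \<inter> \<Phi>b" by (rule inversions_refl_subsystem[OF \<alpha>b])
  have same_neg: "\<xi> \<bullet> w \<gamma> < 0 \<longleftrightarrow> \<xi> \<bullet> wb \<gamma> < 0" if "\<gamma> \<in> \<Phi>b" for \<gamma>
    using same_sign[OF that] root_isometry_neg_iff[OF root_isometry_weyl[OF w], of \<gamma>]
      sub.root_isometry_neg_iff[OF sub.root_isometry_weyl[OF wb] that] that subsystem by blast
  have sets: "{\<gamma>\<in>sub.inversions (refl \<alpha>). \<xi> \<bullet> wb \<gamma> > 0} = {\<gamma>\<in>?N \<inter> \<Phi>b. \<xi> \<bullet> w \<gamma> > 0}"
    "{\<gamma>\<in>sub.inversions (refl \<alpha>). \<xi> \<bullet> wb \<gamma> < 0} = {\<gamma>\<in>?N \<inter> \<Phi>b. \<xi> \<bullet> w \<gamma> < 0}"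
    using same_sign same_neg by (auto simp: Nb)
  from edge consider
      (up) "len \<Phi> \<xi> (w \<circ> refl \<alpha>) = len \<Phi> \<xi> w + 1"
    | (quantum) "real (len \<Phi> \<xi> (w \<circ> refl \<alpha>)) = real (len \<Phi> \<xi> w) - 2 * cht \<Phi> \<xi> \<alpha> + 1"
    unfolding qb_edge_def by blast
  then have "len \<Phi>b \<xi> (wb \<circ> refl \<alpha>) = len \<Phi>b \<xi> wb + 1 \<or>
      real (len \<Phi>b \<xi> (wb \<circ> refl \<alpha>)) = real (len \<Phi>b \<xi> wb) - 2 * cht \<Phi>b \<xi> \<alpha> + 1"
  proof cases
    case up
    then have "card {\<gamma>\<in>?N. \<xi> \<bullet> w \<gamma> > 0} = card {\<gamma>\<in>?N. \<xi> \<bullet> w \<gamma> < 0} + 1"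
      using len_comp_refl[OF w \<alpha>P] by simp
    then have "card {\<gamma>\<in>?N \<inter> \<Phi>b. \<xi> \<bullet> w \<gamma> > 0} = card {\<gamma>\<in>?N \<inter> \<Phi>b. \<xi> \<bullet> w \<gamma> < 0} + 1"
      by (rule sign_balance_subsystem[OF root_isometry_weyl[OF w] \<alpha>])
    then show ?thesis using sub.len_comp_refl[OF wb \<alpha>] sets by simp
  next
    case quantum
    then show ?thesis
      using len_comp_refl_quantum_iff[OF w \<alpha>P] sub.len_comp_refl_quantum_iff[OF wb \<alpha>] same_neg
      by (auto simp: Nb)
  qed
  then show ?thesis using wb \<alpha> by (simp add: qb_edge_def)
qed

lemma coset_minimal_weyl:
  assumes "w \<in> weyl \<Phi>" "coset_minimal \<Phi> \<Phi>b \<xi> w u"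
  shows "u \<in> weyl \<Phi>"
  using assms weyl_comp weyl_subsystem by (auto simp: coset_minimal_def wcoset_def)

text \<open>If \<open>u\<close> sent some \<open>\<gamma> \<in> \<Phi>b\<^sup>+\<close> to a negative root, then \<open>u s\<^sub>\<gamma>\<close> would be an element of the
  coset of smaller length, i.e. a predecessor of \<open>u\<close> in the coset order.\<close>

lemma coset_minimal_pos:
  assumes w: "w \<in> weyl \<Phi>" and u: "coset_minimal \<Phi> \<Phi>b \<xi> w u" and \<gamma>: "\<gamma> \<in> sub.P"
  shows "\<xi> \<bullet> u \<gamma> > 0"
proof (rule ccontr)
  assume "\<not> \<xi> \<bullet> u \<gamma> > 0"
  have uW: "u \<in> weyl \<Phi>" using coset_minimal_weyl[OF w u] .
  have \<gamma>P: "\<gamma> \<in> P" and \<gamma>b: "\<gamma> \<in> \<Phi>b" and \<gamma>0: "\<gamma> \<noteq> 0"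
    using \<gamma> pos_subsystem sub.root_nonzero by (auto simp: sub.pos_iff)
  then have "\<xi> \<bullet> u \<gamma> < 0"
    using \<open>\<not> \<xi> \<bullet> u \<gamma> > 0\<close> root_isometry_sign_cases[OF root_isometry_weyl[OF uW], of \<gamma>]
    by (auto simp: pos_iff)
  define v where "v = u \<circ> refl \<gamma>"
  have vW: "v \<in> weyl \<Phi>" using weyl_comp[OF uW refl_weyl] \<gamma>P by (simp add: v_def pos_iff)
  have len_less: "len \<Phi> \<xi> v < len \<Phi> \<xi> u"
    using card_inversions_comp_refl_less[OF root_isometry_weyl[OF uW] \<gamma>P \<open>\<xi> \<bullet> u \<gamma> < 0\<close>]
      len_eq_card_inversions[OF vW] len_eq_card_inversions[OF uW] by (simp add: v_def)
  have vu: "v \<circ> refl \<gamma> = u" using \<gamma>0 by (simp add: v_def comp_assoc refl_comp_refl)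
  obtain x where x: "x \<in> weyl \<Phi>b" "u = w \<circ> x" using u by (auto simp: coset_minimal_def wcoset_def)
  have "v \<in> wcoset w (weyl \<Phi>b)"
    using sub.weyl_comp[OF x(1) sub.refl_weyl[OF \<gamma>b]] x(2)
    by (auto simp: wcoset_def v_def comp_assoc)
  then have "(v, u) \<in> coset_rel \<Phi> \<Phi>b \<xi> w"
    using len_less \<gamma>b vu unfolding coset_rel_def by force
  then have "v = u" using u \<open>v \<in> wcoset w (weyl \<Phi>b)\<close> by (auto simp: coset_minimal_def)
  then show False using len_less by simp
qed

lemma coset_minimal_sign:
  assumes w: "w \<in> weyl \<Phi>" and u: "coset_minimal \<Phi> \<Phi>b \<xi> w u" and \<delta>: "\<delta> \<in> \<Phi>b"
  shows "\<xi> \<bullet> u \<delta> > 0 \<longleftrightarrow> \<xi> \<bullet> \<delta> > 0"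
proof (cases "\<delta> \<in> sub.P")
  case True
  then show ?thesis using coset_minimal_pos[OF w u] by (simp add: sub.pos_iff)
next
  case False
  then have "- \<delta> \<in> sub.P" using sub.uminus_pos[OF \<delta>] by simp
  moreover have "u (- \<delta>) = - u \<delta>"
    using root_isometry_uminus[OF root_isometry_weyl[OF coset_minimal_weyl[OF w u]]] .
  ultimately show ?thesis using coset_minimal_pos[OF w u, of "- \<delta>"] by (auto simp: sub.pos_iff)
qed

end

theorem theorem5p3:
  fixes \<Phi> \<Phi>b :: "'a::euclidean_space set" and \<xi> :: 'a
    and w u wb :: "'a \<Rightarrow> 'a" and \<alpha> :: 'a
  assumes "root_system \<Phi>" and "irreducible_rs \<Phi>" and "regular \<Phi> \<xi>"
    and "\<Phi>b \<subseteq> \<Phi>" and "root_system \<Phi>b" and "rank_rs \<Phi>b = 2"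
    and "w \<in> weyl \<Phi>"
    and "coset_minimal \<Phi> \<Phi>b \<xi> w u"
    and "wb \<in> weyl \<Phi>b" and "w = u \<circ> wb"
    and "\<alpha> \<in> pos \<Phi>b \<xi>"
    and "qb_edge \<Phi> \<xi> w \<alpha>"
  shows "qb_edge \<Phi>b \<xi> wb \<alpha>"
proof -
  have "regular \<Phi>b \<xi>" using assms(3,4) by (auto simp: regular_def)
  then interpret positive_subsystem \<Phi> \<Phi>b \<xi>
    using assms(1,3,4,5) by unfold_locales
  have "\<xi> \<bullet> w \<gamma> > 0 \<longleftrightarrow> \<xi> \<bullet> wb \<gamma> > 0" if "\<gamma> \<in> \<Phi>b" for \<gamma>
    using coset_minimal_sign[OF assms(7,8) sub.root_isometry_root[OF sub.root_isometry_weyl[OF assms(9)] that]]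
      assms(10) by simp
  then show ?thesis by (rule qb_edge_subsystem[OF assms(7,9,11) _ assms(12)])
qed

end
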